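(* Assume (A1)–(A6) and that the numerical integrator $\Psi$ has order $p\ge1$ in $X$ for the problems $w'(s)=f(t_n+s,w(s))$. Let $\overline{v}_n$ be the generalized solution of $\overline{v}_n'=A\overline{v}_n$, $\overline{v}_n(0)=u(t_n)$, $\partial\overline{v}_n(s)=\partial(u(t_n)+sAu(t_n))$, and let $\overline{u}_{n+1}=\Psi_k^{f,t_n}(\overline{v}_n(k))$ (one step of the modified exponential Lie–Trotter method started from the exact value). Then the local error satisfies $$\rho_{n+1}:=\overline{u}_{n+1}-u(t_{n+1})=O(k^2).$$
   Context: Let $X,Y$ be Banach spaces, $T>0$, $A:D(A)\subset X\to X$ and $\partial:D(A)\to Y$ linear operators, $f:[0,T]\times X\to X$, $g:[0,T]\to Y$, and let $u$ be the solution of $u'(t)=Au(t)+f(t,u(t))$, $u(0)=u_0$, $\partial u(t)=g(t)$, $0\le t\le T$. Standing hypotheses: (A1) $\partial$ is onto. (A2) $\ker\partial$ is dense in $X$ and the restriction $A_0$ of $A$ to $D(A_0)=\ker\partial$ generates a $C_0$-semigroup $(e^{tA_0})_{t\ge0}$ on $X$ of negative type $\omega$. (A3) For every $z\in\mathbb C$ with $\Re z>\omega$ and $v\in Y$, the problem $Ax=zx$, $\partial x=v$ has a unique solution $x=:K(z)v\in D(A)$, and $\|K(z)v\|\le C\|v\|$ with $C$ uniform for $\Re z\ge\omega_0>\omega$. (A4) $f\in C^1([0,T]\times X,X)$. (A5) $u\in C^2([0,T],X)$, $u(t)\in D(A^2)$ for all $t$, and $Au,A^2u\in C^1([0,T],X)$.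 (A6) $f(t,u(t))\in D(A)$ for all $t$ and $Af(\cdot,u(\cdot))\in C([0,T],X)$. Generalized solution: for $u_0\in X$, $v_0,v_1\in Y$, the generalized solution of $w'(s)=Aw(s)$, $w(0)=u_0$, $\partial w(s)=v_0+v_1s$ is $w(s)=e^{sA_0}(u_0-K(0)v_0)+K(0)(v_0+v_1s)-\int_0^s e^{\sigma A_0}K(0)v_1\,d\sigma$. Time step $k>0$, $t_n=nk$. For $\tau\in[0,T]$, $\Psi_k^{f,\tau}(v_0)$ denotes one step of size $k$ of a numerical integrator applied to $v'(s)=f(\tau+s,v(s))$, $v(0)=v_0$; order $p$ means $\Psi_k^{f,\tau}(v_0)-v(k)=O(k^{p+1})$ uniformly for the arguments considered. Notation $a=O(b)$ means $\|a\|\le Cb$ with $C$ independent of $k$ (small enough) and of $n$ with $0\le nk\le T$. *)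

theory Defs
  imports "HOL-Analysis.Analysis"
begin

definition linear_on_dom :: "'a::real_vector set \<Rightarrow> ('a \<Rightarrow> 'b::real_vector) \<Rightarrow> bool" where
  "linear_on_dom D L \<longleftrightarrow> subspace D \<and>
     (\<forall>x\<in>D. \<forall>y\<in>D. L (x + y) = L x + L y) \<and> (\<forall>c. \<forall>x\<in>D. L (c *\<^sub>R x) = c *\<^sub>R L x)"

definition C0_semigroup :: "(real \<Rightarrow> 'a::real_normed_vector \<Rightarrow> 'a) \<Rightarrow> bool" where
  "C0_semigroup S \<longleftrightarrow>
     (\<forall>t\<ge>0. bounded_linear (S t)) \<and> S 0 = id \<and>
     (\<forall>t\<ge>0. \<forall>s\<ge>0. S (t + s) = S t \<circ> S s) \<and>
     (\<forall>x. continuous_on {0..} (\<lambda>t. S t x))"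

definition generates :: "'a::real_normed_vector set \<Rightarrow> ('a \<Rightarrow> 'a) \<Rightarrow> (real \<Rightarrow> 'a \<Rightarrow> 'a) \<Rightarrow> bool" where
  "generates D G S \<longleftrightarrow> C0_semigroup S \<and>
     D = {x. \<exists>y. ((\<lambda>h. (1 / h) *\<^sub>R (S h x - x)) \<longlongrightarrow> y) (at_right 0)} \<and>
     (\<forall>x\<in>D. ((\<lambda>h. (1 / h) *\<^sub>R (S h x - x)) \<longlongrightarrow> G x) (at_right 0))"

definition of_type :: "(real \<Rightarrow> 'a::real_normed_vector \<Rightarrow> 'a) \<Rightarrow> real \<Rightarrow> bool" where
  "of_type S \<omega> \<longleftrightarrow> (\<exists>M. \<forall>t\<ge>0. \<forall>x. norm (S t x) \<le> M * exp (\<omega> * t) * norm x)"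

definition C1_on :: "real set \<Rightarrow> (real \<Rightarrow> 'a::real_normed_vector) \<Rightarrow> bool" where
  "C1_on I h \<longleftrightarrow> (\<exists>h'. (\<forall>t\<in>I. (h has_vector_derivative h' t) (at t within I)) \<and> continuous_on I h')"

definition C2_on :: "real set \<Rightarrow> (real \<Rightarrow> 'a::real_normed_vector) \<Rightarrow> bool" where
  "C2_on I h \<longleftrightarrow> (\<exists>h'. (\<forall>t\<in>I. (h has_vector_derivative h' t) (at t within I)) \<and> C1_on I h')"

definition C1_time_space :: "real \<Rightarrow> (real \<Rightarrow> 'a::real_normed_vector \<Rightarrow> 'a) \<Rightarrow> bool" where
  "C1_time_space T f \<longleftrightarrow> (\<exists>f' :: real \<times> 'a \<Rightarrow> (real \<times> 'a) \<Rightarrow>\<^sub>L 'a.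
     (\<forall>p\<in>{0..T} \<times> UNIV. ((\<lambda>(t, x). f t x) has_derivative blinfun_apply (f' p)) (at p within {0..T} \<times> UNIV)) \<and>
     continuous_on ({0..T} \<times> UNIV) f')"

text \<open>Generalized solution of w' = A w, w(0) = u0, \<partial> w(s) = v0 + s v1.\<close>
definition gen_sol :: "(real \<Rightarrow> 'a::banach \<Rightarrow> 'a) \<Rightarrow> (real \<Rightarrow> 'b \<Rightarrow> 'a) \<Rightarrow> 'a \<Rightarrow> 'b::real_vector \<Rightarrow> 'b \<Rightarrow> real \<Rightarrow> 'a" where
  "gen_sol S K u0 v0 v1 s =
     S s (u0 - K 0 v0) + K 0 (v0 + s *\<^sub>R v1) - integral {0..s} (\<lambda>\<sigma>. S \<sigma> (K 0 v1))"

end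

theory Submission
  imports Defs
begin

text \<open>
  Write \<open>x = u t\<^sub>n\<close>. The generalized solution differs from \<open>x + k A x\<close> by the integral over
  \<open>[0, k]\<close> of \<open>S s z - z\<close>, where \<open>z = A x - K 0 (bd (A x))\<close> lies in the domain of the
  generator; hence by \<open>O(k\<^sup>2)\<close>. Taylor's formula gives
  \<open>u (t\<^sub>n + k) = x + k (A x + f t\<^sub>n x) + O(k\<^sup>2)\<close>. Started at the generalized solution, the flow
  of \<open>f\<close> stays in a tube around the trajectory on which \<open>f\<close> is Lipschitz, so it advances by
  \<open>k f t\<^sub>n x + O(k\<^sup>2)\<close>. The integrator adds \<open>O(k\<^sup>p\<^sup>+\<^sup>1)\<close>, and the first-order terms cancel.
\<close>

lemma of_type_nonpos_uniform_bound:
  assumes "of_type S \<omega>" "\<omega> \<le> 0"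
  obtains M where "M \<ge> 0" "\<And>t x. t \<ge> 0 \<Longrightarrow> norm (S t x) \<le> M * norm x"
proof -
  obtain M where M: "\<And>t x. t \<ge> 0 \<Longrightarrow> norm (S t x) \<le> M * exp (\<omega> * t) * norm x"
    using assms(1) unfolding of_type_def by blast
  have "norm (S t x) \<le> \<bar>M\<bar> * norm x" if "t \<ge> 0" for t x
  proof -
    have "exp (\<omega> * t) \<le> 1"
      using assms(2) that by (simp add: mult_nonpos_nonneg)
    then have "M * exp (\<omega> * t) \<le> \<bar>M\<bar>"
      by (metis abs_ge_self abs_mult abs_of_pos exp_gt_zero mult_left_le order.trans abs_ge_zero)
    then show ?thesis
      using M[OF that, of x] by (meson mult_right_mono norm_ge_zero order_trans)
  qed
  then show ?thesis using that[of "\<bar>M\<bar>"] by auto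
qed

lemma C0_semigroup_orbit_remainder:
  fixes S :: "real \<Rightarrow> 'a::real_normed_vector \<Rightarrow> 'a" and z v :: 'a
  assumes S: "C0_semigroup S" and M: "\<And>t x. t \<ge> 0 \<Longrightarrow> norm (S t x) \<le> M * norm x"
    and t: "t \<ge> 0" and y: "y \<ge> 0" "y \<noteq> t"
  defines "q \<equiv> \<lambda>h. (1 / h) *\<^sub>R (S h z - z) - v"
  shows "norm (S y z - S t z - (y - t) *\<^sub>R S t v)
    \<le> \<bar>y - t\<bar> * (M * norm (q \<bar>y - t\<bar>) + norm (S y v - S t v))"
proof -
  have lin: "\<And>s. s \<ge> 0 \<Longrightarrow> linear (S s)"
    and Sadd: "\<And>s r. s \<ge> 0 \<Longrightarrow> r \<ge> 0 \<Longrightarrow> S (s + r) = S s \<circ> S r"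
    using S unfolding C0_semigroup_def by (auto simp: bounded_linear.linear)
  show ?thesis
  proof (cases "t < y")
    case True
    define h where "h = y - t"
    have "S y z = S t (S h z)" using Sadd[of t h] t True by (simp add: h_def)
    then have "S y z - S t z - (y - t) *\<^sub>R S t v = h *\<^sub>R S t (q h)"
      using True linear_diff[OF lin[OF t]] linear_scale[OF lin[OF t]]
      by (simp add: h_def q_def scaleR_diff_right)
    then show ?thesis
      using M[OF t, of "q h"] True by (simp add: h_def add_increasing2)
  next
    case False
    define h where "h = t - y"
    have h: "h > 0" using False y by (simp add: h_def)
    have "h *\<^sub>R S y (q h) = S y (S h z) - S y z - h *\<^sub>R S y v"
      using h by (simp add: q_def linear_diff[OF lin[OF y(1)]] linear_scale[OF lin[OF y(1)]]
          scaleR_diff_right)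
    moreover have "S t z = S y (S h z)" using Sadd[of y h] y h by (simp add: h_def)
    ultimately have "S y z - S t z - (y - t) *\<^sub>R S t v
        = h *\<^sub>R (S t v - S y v) - h *\<^sub>R S y (q h)"
      by (simp add: h_def algebra_simps)
    also have "norm \<dots> \<le> h * norm (S t v - S y v) + h * norm (S y (q h))"
      using norm_triangle_ineq4[of "h *\<^sub>R (S t v - S y v)" "h *\<^sub>R S y (q h)"] h
      by simp
    also have "\<dots> \<le> h * norm (S y v - S t v) + h * (M * norm (q h))"
      using M[OF y(1), of "q h"] h by (simp add: norm_minus_commute)
    finally show ?thesis using h False by (simp add: h_def algebra_simps)
  qed
qed

lemma generates_orbit_has_vector_derivative:
  fixes S :: "real \<Rightarrow> 'a::real_normed_vector \<Rightarrow> 'a"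
  assumes gen: "generates D A S" and M: "\<And>t x. t \<ge> 0 \<Longrightarrow> norm (S t x) \<le> M * norm x"
    and z: "z \<in> D" and t: "t \<ge> 0"
  shows "((\<lambda>s. S s z) has_vector_derivative S t (A z)) (at t within {0..})"
proof -
  have S: "C0_semigroup S" using gen unfolding generates_def by blast
  define q where "q h = (1 / h) *\<^sub>R (S h z - z) - A z" for h
  define \<epsilon> where "\<epsilon> y = M * norm (q \<bar>y - t\<bar>) + norm (S y (A z) - S t (A z))" for y
  have "(\<epsilon> \<longlongrightarrow> 0) (at t within {0..})"
  proof -
    have "(q \<longlongrightarrow> 0) (at_right 0)"
      using gen z unfolding generates_def q_def by (auto intro: LIM_zero)
    moreover have "filterlim (\<lambda>y. \<bar>y - t\<bar>) (at_right 0) (at t within {0..})"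
      unfolding filterlim_at
      by (auto simp: eventually_at_filter intro!: tendsto_eq_intros)
    ultimately have "((\<lambda>y. q \<bar>y - t\<bar>) \<longlongrightarrow> 0) (at t within {0..})"
      by (rule filterlim_compose)
    moreover have "((\<lambda>y. S y (A z)) \<longlongrightarrow> S t (A z)) (at t within {0..})"
      using S t by (simp add: C0_semigroup_def continuous_on_def)
    ultimately show ?thesis
      unfolding \<epsilon>_def
      by (intro tendsto_add_zero tendsto_mult_right_zero tendsto_norm_zero LIM_zero)
  qed
  moreover have "norm (inverse (norm (y - t)) *\<^sub>R (S y z - S t z - (y - t) *\<^sub>R S t (A z))) \<le> \<epsilon> y"
    if "y \<ge> 0" "y \<noteq> t" for y
  proof -
    have "\<bar>y - t\<bar> > 0" using that by simp
    then show ?thesis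
      using C0_semigroup_orbit_remainder[OF S M t that, of z "A z"]
      by (simp add: \<epsilon>_def q_def inverse_eq_divide pos_divide_le_eq mult.commute)
  qed
  then have "\<forall>\<^sub>F y in at t within {0..}.
      norm (inverse (norm (y - t)) *\<^sub>R (S y z - S t z - (y - t) *\<^sub>R S t (A z))) \<le> \<epsilon> y"
    by (auto simp: eventually_at_filter)
  ultimately have "((\<lambda>y. inverse (norm (y - t)) *\<^sub>R (S y z - S t z - (y - t) *\<^sub>R S t (A z)))
      \<longlongrightarrow> 0) (at t within {0..})"
    by (rule Lim_null_comparison[rotated])
  then show ?thesis
    unfolding has_vector_derivative_def has_derivative_within
    by (simp add: bounded_linear_scaleR_left divide_inverse_commute diff_diff_eq)
qed

lemma generates_orbit_has_integral:
  fixes S :: "real \<Rightarrow> 'a::banach \<Rightarrow> 'a"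
  assumes gen: "generates D A S" and M: "\<And>t x. t \<ge> 0 \<Longrightarrow> norm (S t x) \<le> M * norm x"
    and z: "z \<in> D" and t: "t \<ge> 0"
  shows "((\<lambda>s. S s (A z)) has_integral (S t z - z)) {0..t}"
proof -
  have "S 0 = id" using gen unfolding generates_def C0_semigroup_def by auto
  moreover have "((\<lambda>s. S s (A z)) has_integral (S t z - S 0 z)) {0..t}"
    by (rule fundamental_theorem_of_calculus[OF t])
      (auto intro: has_vector_derivative_within_subset[OF generates_orbit_has_vector_derivative[OF gen M z]])
  ultimately show ?thesis by simp
qed

lemma generates_orbit_lipschitz:
  fixes S :: "real \<Rightarrow> 'a::banach \<Rightarrow> 'a"
  assumes gen: "generates D A S" and M: "\<And>t x. t \<ge> 0 \<Longrightarrow> norm (S t x) \<le> M * norm x"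
    and z: "z \<in> D" and t: "t \<ge> 0"
  shows "norm (S t z - z) \<le> M * norm (A z) * t"
proof -
  have "continuous_on {0..t} (\<lambda>s. S s (A z))"
    using gen unfolding generates_def C0_semigroup_def
    by (meson atLeastAtMost_iff atLeast_iff continuous_on_subset subsetI)
  moreover have "S t z - z = integral {0..t} (\<lambda>s. S s (A z))"
    using generates_orbit_has_integral[OF gen M z t] by (simp add: integral_unique)
  ultimately show ?thesis
    using integral_bound[OF t, of "\<lambda>s. S s (A z)" "M * norm (A z)"] M by simp
qed

lemma linear_on_dom_add:
  "linear_on_dom D L \<Longrightarrow> x \<in> D \<Longrightarrow> y \<in> D \<Longrightarrow> L (x + y) = L x + L y"
  unfolding linear_on_dom_def by blast

lemma linear_on_dom_scaleR:
  "linear_on_dom D L \<Longrightarrow> x \<in> D \<Longrightarrow> L (c *\<^sub>R x) = c *\<^sub>R L x"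
  unfolding linear_on_dom_def by blast

lemma linear_on_dom_diff:
  assumes L: "linear_on_dom D L" and x: "x \<in> D" and y: "y \<in> D"
  shows "L (x - y) = L x - L y"
proof -
  have "(-1) *\<^sub>R y \<in> D" using L y unfolding linear_on_dom_def by (simp add: subspace_neg)
  then show ?thesis
    using linear_on_dom_add[OF L x, of "- y"] linear_on_dom_scaleR[OF L y, of "-1"] by simp
qed

lemma linear_on_dom_subspace: "linear_on_dom D L \<Longrightarrow> subspace D"
  unfolding linear_on_dom_def by blast

lemma lifting_linear:
  fixes K :: "'b::real_vector \<Rightarrow> 'a::real_vector"
  assumes A_lin: "linear_on_dom D A" and bd_lin: "linear_on_dom D bd"
    and K: "\<And>v. K v \<in> D" "\<And>v. A (K v) = 0" "\<And>v. bd (K v) = v"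
    and K_unique: "\<And>v x. x \<in> D \<Longrightarrow> A x = 0 \<Longrightarrow> bd x = v \<Longrightarrow> x = K v"
  shows "linear K"
proof
  have D: "subspace D" using linear_on_dom_subspace[OF A_lin] .
  show "K (a + b) = K a + K b" for a b
    by (rule sym, rule K_unique)
      (simp_all add: subspace_add[OF D] linear_on_dom_add[OF A_lin] linear_on_dom_add[OF bd_lin] K)
  show "K (r *\<^sub>R a) = r *\<^sub>R K a" for r a
    by (rule sym, rule K_unique)
      (simp_all add: subspace_scale[OF D] linear_on_dom_scaleR[OF A_lin] linear_on_dom_scaleR[OF bd_lin] K)
qed

lemma gen_sol_remainder_eq_integral:
  fixes S :: "real \<Rightarrow> 'a::banach \<Rightarrow> 'a" and bd :: "'a \<Rightarrow> 'b::real_vector"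
  assumes A_lin: "linear_on_dom D A" and bd_lin: "linear_on_dom D bd"
    and gen: "generates {x\<in>D. bd x = 0} A S"
    and M: "\<And>t x. t \<ge> 0 \<Longrightarrow> norm (S t x) \<le> M * norm x"
    and K: "\<And>v. K 0 v \<in> D" "\<And>v. A (K 0 v) = 0" "\<And>v. bd (K 0 v) = v"
    and K_linear: "linear (K 0)"
    and x: "x \<in> D" "A x \<in> D" and k: "k \<ge> 0"
  defines "z \<equiv> A x - K 0 (bd (A x))"
  shows "gen_sol S K x (bd x) (bd (A x)) k - x - k *\<^sub>R A x = integral {0..k} (\<lambda>s. S s z - z)"
proof -
  define c where "c = K 0 (bd (A x))"
  define z0 where "z0 = x - K 0 (bd x)"
  have z0: "z0 \<in> {x\<in>D. bd x = 0}" and Az0: "A z0 = A x"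
    using x K linear_on_dom_diff[OF bd_lin] linear_on_dom_diff[OF A_lin]
      subspace_diff[OF linear_on_dom_subspace[OF A_lin]]
    by (auto simp: z0_def)
  have lin: "\<And>s. s \<ge> 0 \<Longrightarrow> linear (S s)" and cont: "\<And>v. continuous_on {0..} (\<lambda>s. S s v)"
    using gen unfolding generates_def C0_semigroup_def by (auto simp: bounded_linear.linear)
  have I1: "((\<lambda>s. S s z + S s c) has_integral (S k z0 - z0)) {0..k}"
  proof (rule has_integral_eq[rotated])
    show "((\<lambda>s. S s (A z0)) has_integral (S k z0 - z0)) {0..k}"
      by (rule generates_orbit_has_integral[OF gen M z0 k])
    show "S s (A z0) = S s z + S s c" if "s \<in> {0..k}" for s
      using that Az0 linear_add[OF lin, of s z c] by (simp add: z_def c_def)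
  qed
  have I2: "((\<lambda>s. S s c) has_integral integral {0..k} (\<lambda>s. S s c)) {0..k}"
    using continuous_on_subset[OF cont[of c]]
    by (intro integrable_integral integrable_continuous_interval) auto
  have I3: "((\<lambda>s. z) has_integral k *\<^sub>R z) {0..k}"
    using has_integral_const_real[of z 0 k] k by simp
  have "((\<lambda>s. S s z - z) has_integral (S k z0 - z0 - integral {0..k} (\<lambda>s. S s c) - k *\<^sub>R z)) {0..k}"
    using has_integral_diff[OF has_integral_diff[OF I1 I2] I3] by simp
  moreover have "gen_sol S K x (bd x) (bd (A x)) k = S k z0 + K 0 (bd x) + k *\<^sub>R c - integral {0..k} (\<lambda>s. S s c)"
    unfolding gen_sol_def by (simp add: linear_add[OF K_linear] linear_scale[OF K_linear] z0_def c_def)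
  ultimately show ?thesis
    by (simp add: integral_unique z_def c_def z0_def algebra_simps)
qed

lemma gen_sol_consistency:
  fixes S :: "real \<Rightarrow> 'a::banach \<Rightarrow> 'a" and bd :: "'a \<Rightarrow> 'b::real_vector"
  assumes A_lin: "linear_on_dom D A" and bd_lin: "linear_on_dom D bd"
    and gen: "generates {x\<in>D. bd x = 0} A S"
    and M: "\<And>t x. t \<ge> 0 \<Longrightarrow> norm (S t x) \<le> M * norm x" "M \<ge> 0"
    and K: "\<And>v. K 0 v \<in> D" "\<And>v. A (K 0 v) = 0" "\<And>v. bd (K 0 v) = v"
    and K_linear: "linear (K 0)"
    and x: "x \<in> D" "A x \<in> D" and k: "k \<ge> 0"
  shows "norm (gen_sol S K x (bd x) (bd (A x)) k - x - k *\<^sub>R A x) \<le> M * norm (A (A x)) * k\<^sup>2"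
proof -
  define z where "z = A x - K 0 (bd (A x))"
  have z: "z \<in> {x\<in>D. bd x = 0}" and Az: "A z = A (A x)"
    using x K linear_on_dom_diff[OF bd_lin] linear_on_dom_diff[OF A_lin]
      subspace_diff[OF linear_on_dom_subspace[OF A_lin]]
    by (auto simp: z_def)
  have "continuous_on {0..k} (\<lambda>s. S s z - z)"
    using gen unfolding generates_def C0_semigroup_def
    by (auto intro!: continuous_intros intro: continuous_on_subset)
  moreover have "norm (S s z - z) \<le> M * norm (A (A x)) * k" if "s \<in> {0..k}" for s
  proof -
    have "norm (S s z - z) \<le> M * norm (A z) * s"
      using generates_orbit_lipschitz[OF gen M(1) z] that by simp
    also have "\<dots> \<le> M * norm (A z) * k"
      using that M(2) by (intro mult_left_mono) auto
    finally show ?thesis using Az by simp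
  qed
  ultimately have "norm (integral {0..k} (\<lambda>s. S s z - z)) \<le> M * norm (A (A x)) * k * (k - 0)"
    using k by (intro integral_bound) auto
  then show ?thesis
    using gen_sol_remainder_eq_integral[where K = K, OF A_lin bd_lin gen M(1) K K_linear x k]
    by (simp add: z_def power2_eq_square algebra_simps)
qed

lemma gen_sol_consistency_along:
  fixes S :: "real \<Rightarrow> 'a::banach \<Rightarrow> 'a" and bd :: "'a \<Rightarrow> 'b::real_vector" and u :: "real \<Rightarrow> 'a"
  assumes A_lin: "linear_on_dom D A" and bd_lin: "linear_on_dom D bd"
    and gen: "generates {x\<in>D. bd x = 0} A S" and S_type: "of_type S \<omega>" "\<omega> \<le> 0"
    and K: "\<And>v. K 0 v \<in> D" "\<And>v. A (K 0 v) = 0" "\<And>v. bd (K 0 v) = v"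
    and K_unique: "\<And>v x. x \<in> D \<Longrightarrow> A x = 0 \<Longrightarrow> bd x = v \<Longrightarrow> x = K 0 v"
    and u: "\<And>t. t \<in> {a..b} \<Longrightarrow> u t \<in> D" "\<And>t. t \<in> {a..b} \<Longrightarrow> A (u t) \<in> D"
    and Au: "continuous_on {a..b} (\<lambda>t. A (u t))"
    and AAu: "continuous_on {a..b} (\<lambda>t. A (A (u t)))"
  obtains C' C where "C' \<ge> 0"
    "\<And>t k. t \<in> {a..b} \<Longrightarrow> 0 \<le> k \<Longrightarrow> k \<le> 1 \<Longrightarrow>
      norm (gen_sol S K (u t) (bd (u t)) (bd (A (u t))) k - u t) \<le> C' * k"
    "\<And>t k. t \<in> {a..b} \<Longrightarrow> 0 \<le> k \<Longrightarrow>
      norm (gen_sol S K (u t) (bd (u t)) (bd (A (u t))) k - u t - k *\<^sub>R A (u t)) \<le> C * k\<^sup>2"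
proof -
  obtain M where M: "M \<ge> 0" "\<And>t x. t \<ge> 0 \<Longrightarrow> norm (S t x) \<le> M * norm x"
    using of_type_nonpos_uniform_bound[OF S_type] by blast
  have K_linear: "linear (K 0)"
    using lifting_linear[OF A_lin bd_lin K K_unique] .
  obtain MA1 where MA1: "MA1 \<ge> 0" "\<And>t. t \<in> {a..b} \<Longrightarrow> norm (A (u t)) \<le> MA1"
    using continuous_on_compact_bound[OF compact_Icc Au] by blast
  obtain MA2 where MA2: "MA2 \<ge> 0" "\<And>t. t \<in> {a..b} \<Longrightarrow> norm (A (A (u t))) \<le> MA2"
    using continuous_on_compact_bound[OF compact_Icc AAu] by blast
  define w0 where "w0 t k = gen_sol S K (u t) (bd (u t)) (bd (A (u t))) k" for t k
  have E1: "norm (w0 t k - u t - k *\<^sub>R A (u t)) \<le> M * MA2 * k\<^sup>2"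
    if t: "t \<in> {a..b}" and k: "0 \<le> k" for t k
  proof -
    have "norm (w0 t k - u t - k *\<^sub>R A (u t)) \<le> M * norm (A (A (u t))) * k\<^sup>2"
      unfolding w0_def
      using gen_sol_consistency[where K = K, OF A_lin bd_lin gen M(2,1) K K_linear u[OF t] k] .
    also have "\<dots> \<le> M * MA2 * k\<^sup>2"
      using MA2(2)[OF t] M(1) by (intro mult_right_mono mult_left_mono) auto
    finally show ?thesis .
  qed
  have "norm (w0 t k - u t) \<le> (MA1 + M * MA2) * k"
    if t: "t \<in> {a..b}" and k: "0 \<le> k" "k \<le> 1" for t k
  proof -
    have "norm (w0 t k - u t) \<le> norm (w0 t k - u t - k *\<^sub>R A (u t)) + norm (k *\<^sub>R A (u t))"
      using norm_triangle_ineq[of "w0 t k - u t - k *\<^sub>R A (u t)" "k *\<^sub>R A (u t)"] by simp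
    also have "\<dots> \<le> M * MA2 * k\<^sup>2 + k * MA1"
      using E1[OF t k(1)] MA1(2)[OF t] k(1) by (intro add_mono) (auto intro: mult_left_mono)
    also have "M * MA2 * k\<^sup>2 \<le> M * MA2 * k"
      using mult_left_le[OF k(2,1)] M(1) MA2(1) by (simp add: power2_eq_square mult_left_mono)
    finally show ?thesis by (simp add: algebra_simps)
  qed
  then show ?thesis
    using that[of "MA1 + M * MA2" "M * MA2"] E1 MA1(1) MA2(1) M(1) unfolding w0_def by simp
qed

lemma norm_diff_le_vector_derivative_bound:
  fixes f :: "real \<Rightarrow> 'b::real_normed_vector"
  assumes ab: "a \<le> b"
    and f': "\<And>x. x \<in> {a..b} \<Longrightarrow> (f has_vector_derivative f' x) (at x within {a..b})"
    and B: "\<And>x. x \<in> {a..b} \<Longrightarrow> norm (f' x) \<le> B"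
  shows "norm (f b - f a) \<le> B * (b - a)"
proof -
  have "norm (f b - f a) \<le> B * norm (b - a)"
  proof (rule differentiable_bound[where f' = "\<lambda>x h. h *\<^sub>R f' x"])
    show "(f has_derivative (\<lambda>h. h *\<^sub>R f' x)) (at x within {a..b})" if "x \<in> {a..b}" for x
      using f'[OF that] by (simp add: has_vector_derivative_def)
    show "onorm (\<lambda>h. h *\<^sub>R f' x) \<le> B" if "x \<in> {a..b}" for x
    proof (rule onorm_le)
      show "norm (h *\<^sub>R f' x) \<le> B * norm h" for h
        using mult_right_mono[OF B[OF that] abs_ge_zero, of h] by (simp add: mult.commute)
    qed
  qed (use ab in auto)
  then show ?thesis using ab by simp
qed

lemma taylor_first_order_remainder_bound:
  fixes f :: "real \<Rightarrow> 'b::real_normed_vector"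
  assumes ab: "a \<le> b"
    and f': "\<And>x. x \<in> {a..b} \<Longrightarrow> (f has_vector_derivative f' x) (at x within {a..b})"
    and f'': "\<And>x. x \<in> {a..b} \<Longrightarrow> (f' has_vector_derivative f'' x) (at x within {a..b})"
    and B: "\<And>x. x \<in> {a..b} \<Longrightarrow> norm (f'' x) \<le> B"
  shows "norm (f b - f a - (b - a) *\<^sub>R f' a) \<le> B * (b - a)\<^sup>2"
proof -
  have "norm (f b - f a - (b - a) *\<^sub>R f' a) \<le> norm (b - a) * (B * (b - a))"
  proof (rule vector_differentiable_bound_linearization[OF f'])
    fix x assume x: "x \<in> {a..b}"
    have "norm (f' x - f' a) \<le> B * (x - a)"
      using x by (intro norm_diff_le_vector_derivative_bound)
        (auto intro: B has_vector_derivative_within_subset[OF f''])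
    also have "\<dots> \<le> B * (b - a)"
      using x B[of a] ab by (intro mult_left_mono) (auto intro: order_trans[OF norm_ge_zero])
    finally show "norm (f' x - f' a) \<le> B * (b - a)" .
  qed (use ab in \<open>auto simp: closed_segment_eq_real_ivl\<close>)
  then show ?thesis using ab by (simp add: power2_eq_square algebra_simps)
qed

lemma ode_solution_stays_in_ball:
  fixes w :: "real \<Rightarrow> 'a::real_normed_vector"
  assumes w': "\<And>s. s \<in> {0..k} \<Longrightarrow> (w has_vector_derivative F s (w s)) (at s within {0..k})"
    and F: "\<And>s y. s \<in> {0..k} \<Longrightarrow> norm (y - x) < r \<Longrightarrow> norm (F s y) \<le> L"
    and L: "L \<ge> 0" and start: "norm (w 0 - x) + L * k < r"
    and s: "s \<in> {0..k}"
  shows "norm (w s - x) < r"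
proof (rule ccontr)
  assume "\<not> norm (w s - x) < r"
  have wc: "continuous_on {0..k} w"
    using w' continuous_on_eq_continuous_within has_vector_derivative_continuous by blast
  define E where "E = {0..k} \<inter> (\<lambda>t. norm (w t - x)) -` {r..}"
  \<comment> \<open>the first time the solution reaches distance \<open>r\<close>; before it the bound on \<open>F\<close> applies\<close>
  define s1 where "s1 = Inf E"
  have bE: "bdd_below E" by (auto simp: E_def bdd_below_def)
  have "closed E" unfolding E_def
    by (intro continuous_closed_preimage continuous_intros wc closed_atLeastAtMost closed_atLeast)
  moreover have "s \<in> E" using s \<open>\<not> norm (w s - x) < r\<close> by (auto simp: E_def)
  ultimately have s1E: "s1 \<in> E" unfolding s1_def using closed_contains_Inf[OF _ bE] by blast
  then have s1: "0 \<le> s1" "s1 \<le> k" by (auto simp: E_def)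
  have inside: "norm (w t - x) < r" if "t \<in> {0..k}" "t < s1" for t
    using that cInf_lower[OF _ bE, of t] by (force simp: E_def s1_def)
  have w0: "norm (w 0 - x) < r" using start mult_nonneg_nonneg[OF L, of k] s by simp
  then have "0 < s1" using s1E s1 by (cases "s1 = 0") (auto simp: E_def)
  have "norm (w s1 - w 0) \<le> L * s1 - L * 0"
  proof (rule differentiable_bound_general[OF \<open>0 < s1\<close>])
    show "continuous_on {0..s1} w" using wc by (rule continuous_on_subset) (use s1 in auto)
    show "continuous_on {0..s1} (\<lambda>t. L * t)" by (intro continuous_intros)
    fix t assume t: "0 < t" "t < s1"
    then have "at t within {0..k} = at t" using s1 by (intro at_within_Icc_at) auto
    then show "(w has_vector_derivative F t (w t)) (at t)" using w'[of t] t s1 by simp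
    show "((\<lambda>t. L * t) has_vector_derivative L) (at t)"
      by (auto intro!: derivative_eq_intros simp: has_real_derivative_iff_has_vector_derivative[symmetric])
    show "norm (F t (w t)) \<le> L" using t s1 by (intro F inside) auto
  qed
  then have "norm (w s1 - x) \<le> norm (w 0 - x) + L * k"
    using norm_triangle_ineq[of "w s1 - w 0" "w 0 - x"] mult_left_mono[OF s1(2) L] by simp
  then show False using start s1E by (auto simp: E_def)
qed

lemma ode_step_linearization:
  fixes w :: "real \<Rightarrow> 'a::real_normed_vector"
  assumes k: "k \<ge> 0"
    and w': "\<And>s. s \<in> {0..k} \<Longrightarrow> (w has_vector_derivative F s (w s)) (at s within {0..k})"
    and lipschitz: "\<And>s1 s2 y1 y2. s1 \<in> {0..k} \<Longrightarrow> s2 \<in> {0..k} \<Longrightarrow>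
      norm (y1 - x) < r \<Longrightarrow> norm (y2 - x) < r \<Longrightarrow>
      norm (F s1 y1 - F s2 y2) \<le> B * (\<bar>s1 - s2\<bar> + norm (y1 - y2))"
    and F: "\<And>s y. s \<in> {0..k} \<Longrightarrow> norm (y - x) < r \<Longrightarrow> norm (F s y) \<le> L"
    and B: "B \<ge> 0" and L: "L \<ge> 0" and start: "norm (w 0 - x) + L * k < r"
  shows "norm (w k - w 0 - k *\<^sub>R F 0 (w 0)) \<le> B * (1 + L) * k\<^sup>2"
proof -
  have inside: "\<And>s. s \<in> {0..k} \<Longrightarrow> norm (w s - x) < r"
    using ode_solution_stays_in_ball[where F = F, OF w' F L start] by blast
  have "norm (F s (w s) - F 0 (w 0)) \<le> B * (1 + L) * k" if s: "s \<in> {0..k}" for s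
  proof -
    have ws: "norm (w s - w 0) \<le> L * (s - 0)"
    proof (rule norm_diff_le_vector_derivative_bound)
      fix \<sigma> assume \<sigma>: "\<sigma> \<in> {0..s}"
      then have \<sigma>k: "\<sigma> \<in> {0..k}" using s by simp
      show "(w has_vector_derivative F \<sigma> (w \<sigma>)) (at \<sigma> within {0..s})"
        using s by (intro has_vector_derivative_within_subset[OF w'[OF \<sigma>k]]) auto
      show "norm (F \<sigma> (w \<sigma>)) \<le> L" using F[OF \<sigma>k inside[OF \<sigma>k]] .
    qed (use s in auto)
    have "norm (F s (w s) - F 0 (w 0)) \<le> B * (\<bar>s - 0\<bar> + norm (w s - w 0))"
      using lipschitz[OF s _ inside[OF s] inside, of 0 0] k by simp
    also have "\<dots> \<le> B * (s + L * s)"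
      using s B ws by (intro mult_left_mono) auto
    also have "\<dots> = B * (1 + L) * s"
      by (simp add: algebra_simps)
    also have "\<dots> \<le> B * (1 + L) * k"
      using s B L by (intro mult_left_mono) auto
    finally show ?thesis .
  qed
  then have "norm (w k - w 0 - (k - 0) *\<^sub>R F 0 (w 0)) \<le> norm (k - 0) * (B * (1 + L) * k)"
    using k by (intro vector_differentiable_bound_linearization[OF w'])
      (auto simp: closed_segment_eq_real_ivl)
  then show ?thesis using k by (simp add: power2_eq_square algebra_simps)
qed

lemma norm_le_power_imp_norm_le_square:
  fixes a :: "'a::real_normed_vector"
  assumes "norm a \<le> C * k ^ (p + 1)" and "1 \<le> p" "0 \<le> k" "k \<le> 1"
  shows "norm a \<le> max C 0 * k\<^sup>2"
proof -
  have "k ^ (p + 1) \<le> k\<^sup>2" using assms(2-4) by (intro power_decreasing) auto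
  then have "max C 0 * k ^ (p + 1) \<le> max C 0 * k\<^sup>2" by (intro mult_left_mono) auto
  moreover have "C * k ^ (p + 1) \<le> max C 0 * k ^ (p + 1)"
    using assms(3) by (intro mult_right_mono) auto
  ultimately show ?thesis using assms(1) by linarith
qed

lemma C1_on_imp_continuous_on: "C1_on I h \<Longrightarrow> continuous_on I h"
  unfolding C1_on_def continuous_on_eq_continuous_within
  by (meson has_vector_derivative_continuous)

lemma continuous_on_bounded_near_compact:
  fixes g :: "'a::metric_space \<Rightarrow> 'b::real_normed_vector"
  assumes g: "continuous_on D g" and C: "compact C" "C \<subseteq> D"
  obtains e B where "e > 0" "\<And>q p. q \<in> C \<Longrightarrow> p \<in> D \<Longrightarrow> dist p q < e \<Longrightarrow> norm (g p) \<le> B"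
proof -
  obtain B0 where B0: "\<And>q. q \<in> C \<Longrightarrow> norm (g q) \<le> B0"
    using continuous_on_compact_bound[OF C(1) continuous_on_subset[OF g C(2)]] by blast
  define \<G> where "\<G> = {V. open V \<and> (\<forall>p\<in>V \<inter> D. norm (g p) \<le> B0 + 1)}"
  have "C \<subseteq> \<Union>\<G>"
  proof
    fix q assume q: "q \<in> C"
    obtain d where d: "d > 0" "\<And>p. p \<in> D \<Longrightarrow> dist p q < d \<Longrightarrow> dist (g p) (g q) < 1"
      using g q C(2) unfolding continuous_on_iff by (meson subsetD zero_less_one)
    have "norm (g p) \<le> B0 + 1" if "p \<in> ball q d \<inter> D" for p
      using d(2)[of p] that B0[OF q] norm_triangle_ineq2[of "g p" "g q"]
      by (auto simp: dist_norm dist_commute)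
    then have "ball q d \<in> \<G>" by (auto simp: \<G>_def)
    then show "q \<in> \<Union>\<G>" using d(1) by (intro UnionI[of "ball q d"]) auto
  qed
  moreover have "\<And>G. G \<in> \<G> \<Longrightarrow> open G" by (simp add: \<G>_def)
  ultimately obtain e where e: "e > 0" "\<And>q. q \<in> C \<Longrightarrow> \<exists>G\<in>\<G>. ball q e \<subseteq> G"
    using Heine_Borel_lemma[OF C(1)] by blast
  show ?thesis
  proof (rule that[OF e(1)])
    fix q p assume "q \<in> C" "p \<in> D" "dist p q < e"
    then show "norm (g p) \<le> B0 + 1"
      using e(2) by (force simp: \<G>_def dist_commute)
  qed
qed

lemma C1_time_space_lipschitz_near_curve:
  fixes f :: "real \<Rightarrow> 'a::real_normed_vector \<Rightarrow> 'a"
  assumes f: "C1_time_space T f" and u: "continuous_on {0..T} u"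
  obtains e B where "e > 0" "B \<ge> 0"
    "\<And>t s1 x1 s2 x2. t \<in> {0..T} \<Longrightarrow> s1 \<in> {0..T} \<Longrightarrow> s2 \<in> {0..T} \<Longrightarrow>
       \<bar>s1 - t\<bar> + norm (x1 - u t) < e \<Longrightarrow> \<bar>s2 - t\<bar> + norm (x2 - u t) < e \<Longrightarrow>
       norm (f s1 x1 - f s2 x2) \<le> B * (\<bar>s1 - s2\<bar> + norm (x1 - x2))"
proof -
  define D where "D = {0..T} \<times> (UNIV :: 'a set)"
  obtain f' :: "real \<times> 'a \<Rightarrow> (real \<times> 'a) \<Rightarrow>\<^sub>L 'a" where
    f': "\<And>p. p \<in> D \<Longrightarrow> ((\<lambda>(t, x). f t x) has_derivative blinfun_apply (f' p)) (at p within D)"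
    and f'_cont: "continuous_on D f'"
    using f unfolding C1_time_space_def D_def by blast
  define \<Gamma> where "\<Gamma> = (\<lambda>t. (t, u t)) ` {0..T}"
  have "compact \<Gamma>" unfolding \<Gamma>_def
    by (intro compact_continuous_image continuous_on_Pair continuous_on_id u) auto
  moreover have "\<Gamma> \<subseteq> D" by (auto simp: \<Gamma>_def D_def)
  ultimately obtain e B0 where e: "e > 0"
    and B0: "\<And>q p. q \<in> \<Gamma> \<Longrightarrow> p \<in> D \<Longrightarrow> dist p q < e \<Longrightarrow> norm (f' p) \<le> B0"
    using continuous_on_bounded_near_compact[OF f'_cont] by blast
  show ?thesis
  proof (rule that[OF e, of "max B0 0"])
    fix t s1 x1 s2 x2
    assume t: "t \<in> {0..T}" and s: "s1 \<in> {0..T}" "s2 \<in> {0..T}"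
      and near: "\<bar>s1 - t\<bar> + norm (x1 - u t) < e" "\<bar>s2 - t\<bar> + norm (x2 - u t) < e"
    define W where "W = ball (t, u t) e \<inter> D"
    have "dist (t, u t) (s, x) \<le> \<bar>s - t\<bar> + norm (x - u t)" for s x
      using norm_Pair_le[of "t - s" "u t - x"] by (simp add: dist_norm abs_minus_commute norm_minus_commute)
    then have W: "(s1, x1) \<in> W" "(s2, x2) \<in> W"
      using near s by (auto simp: W_def D_def intro: le_less_trans)
    have "norm ((\<lambda>(t, x). f t x) (s1, x1) - (\<lambda>(t, x). f t x) (s2, x2))
        \<le> max B0 0 * norm ((s1, x1) - (s2, x2))"
    proof (rule differentiable_bound[OF _ _ _ W])
      show "convex W" unfolding W_def D_def
        by (intro convex_Int convex_ball convex_Times convex_UNIV) auto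
      fix p assume p: "p \<in> W"
      then show "((\<lambda>(t, x). f t x) has_derivative blinfun_apply (f' p)) (at p within W)"
        using has_derivative_subset[OF f'[of p]] by (auto simp: W_def)
      have "(t, u t) \<in> \<Gamma>" using t by (auto simp: \<Gamma>_def)
      then show "onorm (blinfun_apply (f' p)) \<le> max B0 0"
        using B0[of "(t, u t)" p] p by (auto simp: W_def dist_commute norm_blinfun.rep_eq)
    qed
    also have "\<dots> \<le> max B0 0 * (\<bar>s1 - s2\<bar> + norm (x1 - x2))"
      using norm_Pair_le[of "s1 - s2" "x1 - x2"] by (auto intro!: mult_left_mono)
    finally show "norm (f s1 x1 - f s2 x2) \<le> max B0 0 * (\<bar>s1 - s2\<bar> + norm (x1 - x2))"
      by simp
  qed simp
qed

lemma C1_time_space_continuous_along: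
  fixes f :: "real \<Rightarrow> 'a::real_normed_vector \<Rightarrow> 'a"
  assumes f: "C1_time_space T f" and u: "continuous_on {0..T} u"
  shows "continuous_on {0..T} (\<lambda>t. f t (u t))"
proof -
  have "continuous_on ({0..T} \<times> UNIV) (\<lambda>(t, x). f t x)"
    using f unfolding C1_time_space_def continuous_on_eq_continuous_within
    by (meson has_derivative_continuous)
  then have "continuous_on {0..T} ((\<lambda>(t, x). f t x) \<circ> (\<lambda>t. (t, u t)))"
    by (intro continuous_on_compose continuous_on_Pair continuous_on_id u)
      (auto elim: continuous_on_subset)
  then show ?thesis by (simp add: o_def)
qed

lemma C1_time_space_ode_step:
  fixes f :: "real \<Rightarrow> 'a::real_normed_vector \<Rightarrow> 'a"
  assumes f: "C1_time_space T f" and u: "continuous_on {0..T} u"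
  obtains r L k1 C where
    "\<And>t y1 y2. t \<in> {0..T} \<Longrightarrow> norm (y1 - u t) \<le> r \<Longrightarrow> norm (y2 - u t) \<le> r \<Longrightarrow>
       norm (f t y1 - f t y2) \<le> L * norm (y1 - y2)"
    "\<And>t k w. t \<ge> 0 \<Longrightarrow> 0 \<le> k \<Longrightarrow> k \<le> k1 \<Longrightarrow> t + k \<le> T \<Longrightarrow> norm (w 0 - u t) \<le> r \<Longrightarrow>
       (\<And>s. s \<in> {0..k} \<Longrightarrow> (w has_vector_derivative f (t + s) (w s)) (at s within {0..k})) \<Longrightarrow>
       norm (w k - w 0 - k *\<^sub>R f t (w 0)) \<le> C * k\<^sup>2"
    "r > 0" "L \<ge> 0" "k1 > 0"
proof -
  obtain e B where e: "e > 0" and B: "B \<ge> 0"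
    and lip: "\<And>t s1 x1 s2 x2. t \<in> {0..T} \<Longrightarrow> s1 \<in> {0..T} \<Longrightarrow> s2 \<in> {0..T} \<Longrightarrow>
       \<bar>s1 - t\<bar> + norm (x1 - u t) < e \<Longrightarrow> \<bar>s2 - t\<bar> + norm (x2 - u t) < e \<Longrightarrow>
       norm (f s1 x1 - f s2 x2) \<le> B * (\<bar>s1 - s2\<bar> + norm (x1 - x2))"
    using C1_time_space_lipschitz_near_curve[OF f u] by blast
  obtain Fu where Fu: "Fu \<ge> 0" "\<And>t. t \<in> {0..T} \<Longrightarrow> norm (f t (u t)) \<le> Fu"
    using continuous_on_compact_bound[OF compact_Icc C1_time_space_continuous_along[OF f u]] by blast
  define L where "L = Fu + B * e"
  have L: "L \<ge> 0" using Fu B e by (simp add: L_def)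
  define k1 where "k1 = e / (4 * (L + 1))"
  have k1: "k1 > 0" "k1 \<le> e / 4" "L * k1 < e / 4"
    using e L by (auto simp: k1_def field_simps)
  show ?thesis
  proof (rule that[of "e / 4" B k1 "B * (1 + L)"])
    show "e / 4 > 0" "k1 > 0" "B \<ge> 0" using e k1 B by auto
    show "norm (f t y1 - f t y2) \<le> B * norm (y1 - y2)"
      if "t \<in> {0..T}" "norm (y1 - u t) \<le> e / 4" "norm (y2 - u t) \<le> e / 4" for t y1 y2
      using lip[OF that(1) that(1) that(1)] that e by simp
  next
    fix t k and w :: "real \<Rightarrow> 'a"
    assume t: "t \<ge> 0" and k: "0 \<le> k" "k \<le> k1" "t + k \<le> T" and w0: "norm (w 0 - u t) \<le> e / 4"
      and w': "\<And>s. s \<in> {0..k} \<Longrightarrow> (w has_vector_derivative f (t + s) (w s)) (at s within {0..k})"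
    have lip_step: "norm (f (t + s1) y1 - f (t + s2) y2) \<le> B * (\<bar>s1 - s2\<bar> + norm (y1 - y2))"
      if "s1 \<in> {0..k}" "s2 \<in> {0..k}" "norm (y1 - u t) < e / 2" "norm (y2 - u t) < e / 2"
      for s1 s2 y1 y2
      using lip[of t "t + s1" "t + s2" y1 y2] that t k k1 by auto
    have "norm (w k - w 0 - k *\<^sub>R f (t + 0) (w 0)) \<le> B * (1 + L) * k\<^sup>2"
    proof (rule ode_step_linearization[where F = "\<lambda>s. f (t + s)", OF k(1) w' lip_step])
      fix s y assume s: "s \<in> {0..k}" and y: "norm (y - u t) < e / 2"
      have "norm (f (t + s) y - f (t + 0) (u t)) \<le> B * (\<bar>s - 0\<bar> + norm (y - u t))"
        using lip_step[OF s _ y, of 0 "u t"] k e by simp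
      also have "\<dots> \<le> B * e" using s y k k1 B by (intro mult_left_mono) auto
      finally show "norm (f (t + s) y) \<le> L"
        using Fu(2)[of t] t k norm_triangle_ineq2[of "f (t + s) y" "f t (u t)"] by (simp add: L_def)
    next
      show "norm (w 0 - u t) + L * k < e / 2"
        using w0 k1 mult_left_mono[OF k(2) L] by simp
    qed (use B L in auto)
    then show "norm (w k - w 0 - k *\<^sub>R f t (w 0)) \<le> B * (1 + L) * k\<^sup>2" by simp
  qed
qed

lemma C2_on_taylor_uniform:
  fixes u :: "real \<Rightarrow> 'a::real_normed_vector"
  assumes "C2_on {a..b} u" and "a < b"
    and u': "\<And>t. t \<in> {a..b} \<Longrightarrow> (u has_vector_derivative u' t) (at t within {a..b})"
  obtains C where
    "\<And>t k. a \<le> t \<Longrightarrow> 0 \<le> k \<Longrightarrow> t + k \<le> b \<Longrightarrow> norm (u (t + k) - u t - k *\<^sub>R u' t) \<le> C * k\<^sup>2"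
proof -
  obtain v v'' where v: "\<And>t. t \<in> {a..b} \<Longrightarrow> (u has_vector_derivative v t) (at t within {a..b})"
    and v'': "\<And>t. t \<in> {a..b} \<Longrightarrow> (v has_vector_derivative v'' t) (at t within {a..b})"
    and v''_cont: "continuous_on {a..b} v''"
    using assms(1) unfolding C2_on_def C1_on_def by blast
  obtain C where C: "\<And>t. t \<in> {a..b} \<Longrightarrow> norm (v'' t) \<le> C"
    using continuous_on_compact_bound[OF compact_Icc v''_cont] by blast
  have "norm (u (t + k) - u t - k *\<^sub>R u' t) \<le> C * k\<^sup>2"
    if "a \<le> t" "0 \<le> k" "t + k \<le> b" for t k
  proof -
    have sub: "{t..t + k} \<subseteq> {a..b}" using that by auto
    have t: "t \<in> {a..b}" using that by simp
    have "v t = u' t"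
      using vector_derivative_unique_within_closed_interval[of a b t u "v t" "u' t"] assms(2) t
        v[OF t] u'[OF t] by simp
    moreover have "norm (u (t + k) - u t - (t + k - t) *\<^sub>R v t) \<le> C * (t + k - t)\<^sup>2"
      using that sub
      by (intro taylor_first_order_remainder_bound[where f'' = v''] C
          has_vector_derivative_within_subset[OF v''] has_vector_derivative_within_subset[OF v]) auto
    ultimately show ?thesis by simp
  qed
  then show ?thesis using that by blast
qed

lemma local_error_split:
  fixes x w0 wk \<psi> u1 y fx fw0 :: "'a::real_normed_vector"
  assumes E1: "norm (w0 - x - k *\<^sub>R y) \<le> C1 * k\<^sup>2"
    and E2: "norm (u1 - x - k *\<^sub>R (y + fx)) \<le> C2 * k\<^sup>2"
    and E3: "norm (wk - w0 - k *\<^sub>R fw0) \<le> C3 * k\<^sup>2"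
    and lip: "norm (fw0 - fx) \<le> L * norm (w0 - x)" and close: "norm (w0 - x) \<le> C4 * k"
    and E5: "norm (\<psi> - wk) \<le> C5 * k\<^sup>2" and k: "k \<ge> 0" and L: "L \<ge> 0"
  shows "norm (\<psi> - u1) \<le> (C1 + C2 + C3 + L * C4 + C5) * k\<^sup>2"
proof -
  define a b c d e where "a = \<psi> - wk" and "b = wk - w0 - k *\<^sub>R fw0" and "c = k *\<^sub>R (fw0 - fx)"
    and "d = w0 - x - k *\<^sub>R y" and "e = u1 - x - k *\<^sub>R (y + fx)"
  have split: "\<psi> - u1 = a + b + c + d - e"
    by (simp add: a_def b_def c_def d_def e_def algebra_simps)
  have "norm (\<psi> - u1) \<le> norm a + norm b + norm c + norm d + norm e"
    unfolding split
    using norm_triangle_ineq4[of "a + b + c + d" e] norm_triangle_ineq[of "a + b + c" d]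
      norm_triangle_ineq[of "a + b" c] norm_triangle_ineq[of a b] by linarith
  moreover have "norm c \<le> L * C4 * k\<^sup>2"
  proof -
    have "norm c = k * norm (fw0 - fx)" using k by (simp add: c_def)
    also have "\<dots> \<le> k * (L * (C4 * k))"
      using k lip mult_left_mono[OF close L] by (intro mult_left_mono) auto
    finally show ?thesis by (simp add: power2_eq_square algebra_simps)
  qed
  moreover have "(C1 + C2 + C3 + L * C4 + C5) * k\<^sup>2
      = C1 * k\<^sup>2 + C2 * k\<^sup>2 + C3 * k\<^sup>2 + L * C4 * k\<^sup>2 + C5 * k\<^sup>2"
    by (simp add: algebra_simps)
  ultimately show ?thesis
    using E1 E2 E3 E5 unfolding a_def b_def d_def e_def by linarith
qed

theorem theorem3p2:
  fixes A :: "'a::banach \<Rightarrow> 'a" and DA :: "'a set"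
    and bd :: "'a \<Rightarrow> 'b::banach"
    and S :: "real \<Rightarrow> 'a \<Rightarrow> 'a" and \<omega> :: real
    and K :: "real \<Rightarrow> 'b \<Rightarrow> 'a"
    and f :: "real \<Rightarrow> 'a \<Rightarrow> 'a" and g :: "real \<Rightarrow> 'b"
    and u :: "real \<Rightarrow> 'a" and u0 :: 'a and T :: real
    and Psi :: "real \<Rightarrow> real \<Rightarrow> 'a \<Rightarrow> 'a" and p :: nat
  assumes T_pos: "T > 0"
    and A_lin: "linear_on_dom DA A"
    and bd_lin: "linear_on_dom DA bd"
    \<comment> \<open>(A1)\<close>
    and A1: "bd ` DA = UNIV"
    \<comment> \<open>(A2)\<close>
    and A2_dense: "closure {x\<in>DA. bd x = 0} = UNIV"
    and A2_gen: "generates {x\<in>DA. bd x = 0} A S"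
    and A2_type: "\<omega> < 0" "of_type S \<omega>"
    \<comment> \<open>(A3), with real spectral parameter z\<close>
    and A3_sol: "\<And>z v. z > \<omega> \<Longrightarrow> K z v \<in> DA \<and> A (K z v) = z *\<^sub>R K z v \<and> bd (K z v) = v"
    and A3_uniq: "\<And>z v x. z > \<omega> \<Longrightarrow> x \<in> DA \<Longrightarrow> A x = z *\<^sub>R x \<Longrightarrow> bd x = v \<Longrightarrow> x = K z v"
    and A3_bound: "\<And>\<omega>0. \<omega>0 > \<omega> \<Longrightarrow> \<exists>C. \<forall>z\<ge>\<omega>0. \<forall>v. norm (K z v) \<le> C * norm v"
    \<comment> \<open>(A4)\<close>
    and A4: "C1_time_space T f"
    \<comment> \<open>u solves the problem\<close>
    and u_DA: "\<And>t. t \<in> {0..T} \<Longrightarrow> u t \<in> DA"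
    and u_ode: "\<And>t. t \<in> {0..T} \<Longrightarrow>
                 (u has_vector_derivative (A (u t) + f t (u t))) (at t within {0..T})"
    and u_init: "u 0 = u0"
    and u_bd: "\<And>t. t \<in> {0..T} \<Longrightarrow> bd (u t) = g t"
    \<comment> \<open>(A5)\<close>
    and A5_C2: "C2_on {0..T} u"
    and A5_dom: "\<And>t. t \<in> {0..T} \<Longrightarrow> A (u t) \<in> DA"
    and A5_Au: "C1_on {0..T} (\<lambda>t. A (u t))"
    and A5_AAu: "C1_on {0..T} (\<lambda>t. A (A (u t)))"
    \<comment> \<open>(A6)\<close>
    and A6_dom: "\<And>t. t \<in> {0..T} \<Longrightarrow> f t (u t) \<in> DA"
    and A6_cont: "continuous_on {0..T} (\<lambda>t. A (f t (u t)))"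
    \<comment> \<open>the integrator has order p \<ge> 1 for w' = f(t_n + s, w(s)), started from the values considered\<close>
    and p_ge: "p \<ge> 1"
    and order: "\<exists>C k0. k0 > 0 \<and> (\<forall>k n. 0 < k \<and> k \<le> k0 \<and> real (Suc n) * k \<le> T \<longrightarrow>
         (\<exists>w. w 0 = gen_sol S K (u (real n * k)) (bd (u (real n * k))) (bd (A (u (real n * k)))) k \<and>
              (\<forall>s\<in>{0..k}. (w has_vector_derivative f (real n * k + s) (w s)) (at s within {0..k})) \<and>
              norm (Psi k (real n * k) (w 0) - w k) \<le> C * k ^ (p + 1)))"
  shows "\<exists>C k0. k0 > 0 \<and> (\<forall>k n. 0 < k \<and> k \<le> k0 \<and> real (Suc n) * k \<le> T \<longrightarrow>
           norm (Psi k (real n * k)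
                   (gen_sol S K (u (real n * k)) (bd (u (real n * k))) (bd (A (u (real n * k)))) k)
                 - u (real (Suc n) * k)) \<le> C * k ^ 2)"
proof -
  have K: "\<And>v. K 0 v \<in> DA" "\<And>v. A (K 0 v) = 0" "\<And>v. bd (K 0 v) = v"
    and K_unique: "\<And>v x. x \<in> DA \<Longrightarrow> A x = 0 \<Longrightarrow> bd x = v \<Longrightarrow> x = K 0 v"
    using A3_sol[of 0] A3_uniq[of 0] A2_type(1) by auto
  obtain C4 C1 where C4: "C4 \<ge> 0"
    and close: "\<And>t k. t \<in> {0..T} \<Longrightarrow> 0 \<le> k \<Longrightarrow> k \<le> 1 \<Longrightarrow>
      norm (gen_sol S K (u t) (bd (u t)) (bd (A (u t))) k - u t) \<le> C4 * k"
    and E1: "\<And>t k. t \<in> {0..T} \<Longrightarrow> 0 \<le> k \<Longrightarrow>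
      norm (gen_sol S K (u t) (bd (u t)) (bd (A (u t))) k - u t - k *\<^sub>R A (u t)) \<le> C1 * k\<^sup>2"
    using gen_sol_consistency_along[where K = K, OF A_lin bd_lin A2_gen A2_type(2) less_imp_le[OF A2_type(1)]
        K K_unique u_DA A5_dom C1_on_imp_continuous_on[OF A5_Au] C1_on_imp_continuous_on[OF A5_AAu]]
    by blast
  obtain C2 where taylor: "\<And>t k. 0 \<le> t \<Longrightarrow> 0 \<le> k \<Longrightarrow> t + k \<le> T \<Longrightarrow>
      norm (u (t + k) - u t - k *\<^sub>R (A (u t) + f t (u t))) \<le> C2 * k\<^sup>2"
    using C2_on_taylor_uniform[OF A5_C2 T_pos u_ode] by blast
  have u_cont: "continuous_on {0..T} u"
    unfolding continuous_on_eq_continuous_within using u_ode has_vector_derivative_continuous by blast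
  obtain r L k1 C3 where
    lip: "\<And>t y1 y2. t \<in> {0..T} \<Longrightarrow> norm (y1 - u t) \<le> r \<Longrightarrow> norm (y2 - u t) \<le> r \<Longrightarrow>
       norm (f t y1 - f t y2) \<le> L * norm (y1 - y2)"
    and flow: "\<And>t k w. t \<ge> 0 \<Longrightarrow> 0 \<le> k \<Longrightarrow> k \<le> k1 \<Longrightarrow> t + k \<le> T \<Longrightarrow> norm (w 0 - u t) \<le> r \<Longrightarrow>
       (\<And>s. s \<in> {0..k} \<Longrightarrow> (w has_vector_derivative f (t + s) (w s)) (at s within {0..k})) \<Longrightarrow>
       norm (w k - w 0 - k *\<^sub>R f t (w 0)) \<le> C3 * k\<^sup>2"
    and r: "r > 0" and L: "L \<ge> 0" and k1: "k1 > 0"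
    using C1_time_space_ode_step[OF A4 u_cont] by blast
  obtain Cp kp where kp: "kp > 0" and Psi_order: "\<forall>k n. 0 < k \<and> k \<le> kp \<and> real (Suc n) * k \<le> T \<longrightarrow>
      (\<exists>w. w 0 = gen_sol S K (u (real n * k)) (bd (u (real n * k))) (bd (A (u (real n * k)))) k \<and>
        (\<forall>s\<in>{0..k}. (w has_vector_derivative f (real n * k + s) (w s)) (at s within {0..k})) \<and>
        norm (Psi k (real n * k) (w 0) - w k) \<le> Cp * k ^ (p + 1))"
    using order by blast
  define k0 where "k0 = min 1 (min kp (min k1 (r / (C4 + 1))))"
  show ?thesis
  proof (rule exI[of _ "C1 + C2 + C3 + L * C4 + max Cp 0"], rule exI[of _ k0], intro conjI allI impI)
    show "k0 > 0" using kp k1 r C4 by (simp add: k0_def)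
    fix k :: real and n :: nat
    assume "0 < k \<and> k \<le> k0 \<and> real (Suc n) * k \<le> T"
    then have k: "0 < k" "k \<le> 1" "k \<le> kp" "k \<le> k1" "k \<le> r / (C4 + 1)"
      and nT: "real (Suc n) * k \<le> T"
      by (auto simp: k0_def)
    define t where "t = real n * k"
    have t: "t \<in> {0..T}" "t + k \<le> T" "real (Suc n) * k = t + k"
      using nT k(1) by (auto simp: t_def algebra_simps)
    define w0 where "w0 = gen_sol S K (u t) (bd (u t)) (bd (A (u t))) k"
    have "C4 * k + k \<le> r" using k(5) C4 by (simp add: field_simps)
    then have w0_near: "norm (w0 - u t) \<le> r"
      using close[OF t(1) less_imp_le[OF k(1)] k(2)] k(1) unfolding w0_def by linarith
    obtain w where w0: "w 0 = w0"
      and w': "\<And>s. s \<in> {0..k} \<Longrightarrow> (w has_vector_derivative f (t + s) (w s)) (at s within {0..k})"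
      and E5: "norm (Psi k t w0 - w k) \<le> Cp * k ^ (p + 1)"
      using Psi_order[rule_format, of k n] k(1,3) nT unfolding w0_def t_def by auto
    have E2: "norm (u (t + k) - u t - k *\<^sub>R (A (u t) + f t (u t))) \<le> C2 * k\<^sup>2"
      using taylor[of t k] t k(1) by simp
    have E3: "norm (w k - w0 - k *\<^sub>R f t w0) \<le> C3 * k\<^sup>2"
      using flow[of t k w, OF _ _ k(4) t(2) _ w'] w0 w0_near t(1) k(1) by simp
    have "norm (Psi k t w0 - u (t + k)) \<le> (C1 + C2 + C3 + L * C4 + max Cp 0) * k\<^sup>2"
    proof (rule local_error_split[OF _ E2 E3 _ _ _ _ L])
      show "norm (w0 - u t - k *\<^sub>R A (u t)) \<le> C1 * k\<^sup>2"
        using E1[OF t(1)] k(1) by (simp add: w0_def)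
      show "norm (f t w0 - f t (u t)) \<le> L * norm (w0 - u t)"
        using lip[OF t(1) w0_near] r by simp
      show "norm (w0 - u t) \<le> C4 * k"
        using close[OF t(1)] k(1,2) by (simp add: w0_def)
      show "norm (Psi k t w0 - w k) \<le> max Cp 0 * k\<^sup>2"
        using norm_le_power_imp_norm_le_square[OF E5 p_ge] k(1,2) by simp
    qed (use k(1) in simp)
    then show "norm (Psi k (real n * k) (gen_sol S K (u (real n * k)) (bd (u (real n * k)))
        (bd (A (u (real n * k)))) k) - u (real (Suc n) * k))
        \<le> (C1 + C2 + C3 + L * C4 + max Cp 0) * k\<^sup>2"
      unfolding t(3) by (simp add: w0_def t_def)
  qed
qed

end
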